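(* Let $P(z)=z^3+az^2+bz+c$ be a cubic polynomial with complex coefficients such that $0<1-|c|^2\le|a\bar c-\bar b|$. Then $P$ has a root $r$ with $|r|\ge1$. *)

theory Defs
  imports Complex_Main
begin

end

theory Submission
  imports Defs "HOL-Computational_Algebra.Fundamental_Theorem_Algebra"
begin

text \<open>
  Suppose every root of \<open>P z = z^3 + a z^2 + b z + c\<close> lies in the open unit disc.
  Factorwise \<open>|1 - cnj w * z| \<le> |z - w|\<close> for \<open>|w| \<le> 1 \<le> |z|\<close>, so the reciprocal
  polynomial \<open>P\<^sup>* z = z^3 cnj (P (1 / cnj z))\<close> satisfies \<open>|P\<^sup>*| \<le> |P|\<close> outside the disc.
  Since \<open>|c| < 1\<close>, the Schur--Cohn transform \<open>(P - c P\<^sup>*) / z\<close> therefore has no roots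
  outside the disc either. It is a quadratic with leading coefficient \<open>1 - |c|^2\<close> and
  constant coefficient \<open>b - c * cnj a\<close>, so the product of its roots gives
  \<open>|a * cnj c - cnj b| < 1 - |c|^2\<close>.
\<close>

lemma norm_diff_sq_minus_norm_one_minus_cnj_mult_sq:
  fixes z w :: complex
  shows "(cmod (z - w))^2 - (cmod (1 - cnj w * z))^2 = ((cmod z)^2 - 1) * (1 - (cmod w)^2)"
proof -
  have "complex_of_real ((cmod (z - w))^2 - (cmod (1 - cnj w * z))^2)
      = (z - w) * cnj (z - w) - (1 - cnj w * z) * cnj (1 - cnj w * z)"
    by (simp only: of_real_diff complex_norm_square)
  also have "\<dots> = (z * cnj z - 1) * (1 - w * cnj w)"
    by (simp add: algebra_simps)
  also have "\<dots> = complex_of_real (((cmod z)^2 - 1) * (1 - (cmod w)^2))"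
    by (simp only: of_real_mult of_real_diff complex_norm_square of_real_1)
  finally show ?thesis
    using of_real_eq_iff by blast
qed

lemma norm_one_minus_cnj_mult_le_norm_diff:
  fixes z w :: complex
  assumes "1 \<le> cmod z" "cmod w \<le> 1"
  shows "cmod (1 - cnj w * z) \<le> cmod (z - w)"
proof -
  have "0 \<le> ((cmod z)^2 - 1) * (1 - (cmod w)^2)"
    using assms by (simp add: one_le_power power_le_one)
  then have "(cmod (1 - cnj w * z))^2 \<le> (cmod (z - w))^2"
    using norm_diff_sq_minus_norm_one_minus_cnj_mult_sq[of z w] by linarith
  then show ?thesis
    by (simp add: power2_le_iff_abs_le)
qed

lemma complex_poly_decompose_pointwise:
  fixes p :: "complex poly"
  assumes "p \<noteq> 0"
  obtains r where "\<And>z. poly p z = lead_coeff p * (\<Prod>i<degree p. z - r i)"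
    and "\<And>i. i < degree p \<Longrightarrow> poly p (r i) = 0"
proof -
  obtain r where r: "smult (lead_coeff p) (\<Prod>i<degree p. [:-r i, 1:]) = p"
    using complex_poly_decompose' by blast
  have poly_p: "poly p z = lead_coeff p * (\<Prod>i<degree p. z - r i)" for z
    by (subst r [symmetric]) (simp add: poly_prod)
  moreover have "poly p (r i) = 0" if "i < degree p" for i
    using that by (auto simp: poly_p)
  ultimately show ?thesis
    using that by blast
qed

lemma poly_reflect_poly_cnj_eq_prod:
  fixes p :: "complex poly"
  assumes "\<And>z. poly p z = lead_coeff p * (\<Prod>i<degree p. z - r i)" "z \<noteq> 0"
  shows "poly (reflect_poly (map_poly cnj p)) z
           = cnj (lead_coeff p) * (\<Prod>i<degree p. 1 - cnj (r i) * z)"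
proof -
  have "poly (reflect_poly (map_poly cnj p)) z = z ^ degree p * cnj (poly p (cnj (inverse z)))"
    using assms(2) by (simp add: poly_reflect_poly_nz degree_map_poly)
  also have "\<dots> = cnj (lead_coeff p) * (\<Prod>i<degree p. z * (inverse z - cnj (r i)))"
    by (simp add: assms(1) prod.distrib)
  also have "\<dots> = cnj (lead_coeff p) * (\<Prod>i<degree p. 1 - cnj (r i) * z)"
    using assms(2) by (simp add: algebra_simps)
  finally show ?thesis .
qed

lemma norm_poly_reflect_poly_cnj_le:
  fixes p :: "complex poly"
  assumes roots: "\<And>w. poly p w = 0 \<Longrightarrow> cmod w \<le> 1" and z: "1 \<le> cmod z"
  shows "cmod (poly (reflect_poly (map_poly cnj p)) z) \<le> cmod (poly p z)"
proof (cases "p = 0")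
  case False
  then obtain r where poly_p: "\<And>z. poly p z = lead_coeff p * (\<Prod>i<degree p. z - r i)"
    and root_r: "\<And>i. i < degree p \<Longrightarrow> poly p (r i) = 0"
    using complex_poly_decompose_pointwise by blast
  have "z \<noteq> 0"
    using z by auto
  then have "cmod (poly (reflect_poly (map_poly cnj p)) z)
      = cmod (lead_coeff p) * (\<Prod>i<degree p. cmod (1 - cnj (r i) * z))"
    by (simp add: poly_reflect_poly_cnj_eq_prod [OF poly_p] norm_mult prod_norm)
  also have "\<dots> \<le> cmod (lead_coeff p) * (\<Prod>i<degree p. cmod (z - r i))"
    using z roots root_r
    by (intro mult_left_mono prod_mono) (auto intro: norm_one_minus_cnj_mult_le_norm_diff)
  also have "\<dots> = cmod (poly p z)"
    by (simp add: poly_p norm_mult prod_norm)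
  finally show ?thesis .
qed simp

lemma poly_neq_mult_poly_reflect_poly_cnj:
  fixes p :: "complex poly"
  assumes roots: "\<And>w. poly p w = 0 \<Longrightarrow> cmod w < 1"
    and "cmod \<gamma> < 1" and z: "1 \<le> cmod z"
  shows "poly p z \<noteq> \<gamma> * poly (reflect_poly (map_poly cnj p)) z"
proof
  assume eq: "poly p z = \<gamma> * poly (reflect_poly (map_poly cnj p)) z"
  have "poly p z \<noteq> 0"
    using roots z by force
  have "cmod (poly p z) = cmod \<gamma> * cmod (poly (reflect_poly (map_poly cnj p)) z)"
    by (simp add: eq norm_mult)
  also have "\<dots> \<le> cmod \<gamma> * cmod (poly p z)"
    using roots z by (intro mult_left_mono norm_poly_reflect_poly_cnj_le) force+
  also have "\<dots> < cmod (poly p z)"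
    using \<open>cmod \<gamma> < 1\<close> \<open>poly p z \<noteq> 0\<close> by simp
  finally show False
    by simp
qed

lemma norm_coeff_0_less_lead_coeff:
  fixes p :: "complex poly"
  assumes "0 < degree p" and roots: "\<And>w. poly p w = 0 \<Longrightarrow> cmod w < 1"
  shows "cmod (coeff p 0) < cmod (lead_coeff p)"
proof -
  have "p \<noteq> 0"
    using assms(1) by auto
  then obtain r where poly_p: "\<And>z. poly p z = lead_coeff p * (\<Prod>i<degree p. z - r i)"
    and root_r: "\<And>i. i < degree p \<Longrightarrow> poly p (r i) = 0"
    using complex_poly_decompose_pointwise by blast
  have small: "cmod (r i) < 1" if "i < degree p" for i
    using roots root_r that by blast
  have "cmod (coeff p 0) = cmod (lead_coeff p) * (\<Prod>i<degree p. cmod (r i))"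
    by (simp add: poly_0_coeff_0 [symmetric] poly_p norm_mult prod_norm [symmetric])
  also have "\<dots> < cmod (lead_coeff p) * (\<Prod>i<degree p. 1)"
    using assms(1) small \<open>p \<noteq> 0\<close>
    by (intro mult_strict_left_mono prod_mono_strict [of 0]) (auto simp: less_imp_le)
  finally show ?thesis
    by simp
qed

theorem lemma5p5:
  fixes a b c :: complex
  assumes "0 < 1 - (cmod c)^2"
    and "1 - (cmod c)^2 \<le> cmod (a * cnj c - cnj b)"
  shows "\<exists>r::complex. r^3 + a * r^2 + b * r + c = 0 \<and> cmod r \<ge> 1"
proof (rule ccontr)
  assume no_outer_root: "\<not> ?thesis"
  define p where "p = [:c, b, a, 1:]"
  have roots_p: "cmod w < 1" if "poly p w = 0" for w
    using no_outer_root that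
    by (auto simp: p_def not_le algebra_simps power2_eq_square power3_eq_cube)
  define q where "q = [:b - c * cnj a, a - c * cnj b, 1 - c * cnj c:]"
  have poly_q: "z * poly q z = poly p z - c * poly (reflect_poly (map_poly cnj p)) z"
    if "z \<noteq> 0" for z
    using that
    by (simp add: p_def q_def poly_reflect_poly_nz degree_map_poly field_simps
        power2_eq_square power3_eq_cube)
  have "cmod c < 1"
    using assms(1) by (simp add: power_less_one_iff)
  then have roots_q: "cmod w < 1" if "poly q w = 0" for w
    using poly_neq_mult_poly_reflect_poly_cnj [of p c w] roots_p poly_q [of w] that
    by (cases "w = 0") (auto simp: not_le [symmetric])
  have norm_c_sq: "1 - c * cnj c = of_real (1 - (cmod c)^2)"
    by (simp flip: complex_norm_square)
  have deg_q: "degree q = 2" and lead_coeff_q: "lead_coeff q = of_real (1 - (cmod c)^2)"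
    unfolding q_def norm_c_sq using assms(1) by (simp_all del: of_real_diff)
  have "cmod (coeff q 0) < cmod (lead_coeff q)"
    using roots_q by (intro norm_coeff_0_less_lead_coeff) (simp_all add: deg_q)
  then have coeff_0_q: "cmod (b - c * cnj a) < 1 - (cmod c)^2"
    unfolding lead_coeff_q norm_of_real using assms(1) by (simp add: q_def)
  have "cnj (b - c * cnj a) = - (a * cnj c - cnj b)"
    by (simp add: algebra_simps)
  then have "cmod (b - c * cnj a) = cmod (a * cnj c - cnj b)"
    by (metis complex_mod_cnj norm_minus_cancel)
  then show False
    using coeff_0_q assms(2) by simp
qed

end
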